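(* Let $G=(V,E)$ be a finite simple strongly connected directed graph with a fixed total order on $V$, let $W\subseteq V$ be strongly connected and $w\in W$. For each spanning tree $\mathbf b$ rooted at $w$ with $\psi(\mathbf b)=W$, define the formal signed combination of forests rooted in $W$ $$\nu_{\mathbf b}=\sum_{\mathfrak F\subseteq\mathfrak E_{\mathbf b}}(-1)^{|\mathfrak F|}\,\delta_{\mathbf f_{\mathfrak F}},$$ with $\mathfrak E_{\mathbf b}$ and $\mathbf f_{\mathfrak F}$ as below. Then the family $(\nu_{\mathbf b})$, indexed by all spanning trees $\mathbf b$ rooted at $w$ with $\psi(\mathbf b)=W$, is linearly independent in the vector space with basis $\{\delta_{\mathbf f}\}$ indexed by forests of $G$ rooted in $W$.
   Context: A spanning tree of $G$ is a subgraph on all vertices with no cycle, one vertex (root) of outdegree $0$ and all others of outdegree $1$. For nonempty $U\subseteq V$, a forest rooted in $U$ is a subgraph on all vertices with no cycle in which vertices of $U$ have outdegree $0$ and all others outdegree $1$. Exploration algorithm (depends on the fixed total order of $V$). Input: a spanning tree $\mathbf a$ rooted at $v$. Initialize $A=\{v\}$, $F=\{e: s(e)\neq v\}$, $\mathbf L$ = FIFO list of edges with target $v$, by increasing source. While $\mathbf L$ is nonempty, take its first edge $e$, with source $u$: if $e\in\mathbf a$, add $u$ to $A$, delete from $\mathbf L$ (and $F$) all edges with source $u$, and append to $\mathbf L$ all edges of $F$ with target $u$ by increasing source; otherwise delete from $\mathbf L$ and $F$ all edges with source or target $u$, and $u$ is said to be erased by the edge $e$. At the end $\phi(\mathbf a)=A$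 and $\psi(\mathbf a)$ is the strongly connected component of $v$ in the induced graph $G_{\phi(\mathbf a)}$. For a tree $\mathbf b$ as in the claim: $\mathbf f$ is the set of edges of $\mathbf b$ whose source is not in $W$; $\mathfrak E_{\mathbf b}$ is the set of vertices erased when running the algorithm on $\mathbf b$; for $u\in\mathfrak E_{\mathbf b}$, $e(u)$ is the edge that erased $u$; for $\mathfrak F\subseteq\mathfrak E_{\mathbf b}$, $\mathbf f_{\mathfrak F}$ is obtained from $\mathbf f$ by replacing, for each $u\in\mathfrak F$, the edge of $\mathbf f$ going out of $u$ by $e(u)$ (it is a forest rooted in $W$). *)

theory Defs
  imports Complex_Main "HOL-Library.While_Combinator"
begin

(* Directed graphs: vertex set V (finite, ordered by the linorder on 'a),
   edge set E \<subseteq> V \<times> V; an edge e has source fst e and target snd e. *)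

definition simple_digraph :: "'a set \<Rightarrow> ('a \<times> 'a) set \<Rightarrow> bool" where
  "simple_digraph V E \<longleftrightarrow> finite V \<and> E \<subseteq> V \<times> V \<and> (\<forall>x. (x, x) \<notin> E)"

definition strongly_connected_set :: "('a \<times> 'a) set \<Rightarrow> 'a set \<Rightarrow> bool" where
  "strongly_connected_set E U \<longleftrightarrow> (\<forall>x\<in>U. \<forall>y\<in>U. (x, y) \<in> (E \<inter> U \<times> U)\<^sup>*)"

definition forest_rooted :: "'a set \<Rightarrow> ('a \<times> 'a) set \<Rightarrow> 'a set \<Rightarrow> ('a \<times> 'a) set \<Rightarrow> bool" where
  "forest_rooted V E U a \<longleftrightarrow> a \<subseteq> E \<and> acyclic a
     \<and> (\<forall>u\<in>U. \<forall>y. (u, y) \<notin> a)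
     \<and> (\<forall>x\<in>V - U. \<exists>!y. (x, y) \<in> a)"

definition spanning_tree :: "'a set \<Rightarrow> ('a \<times> 'a) set \<Rightarrow> 'a \<Rightarrow> ('a \<times> 'a) set \<Rightarrow> bool" where
  "spanning_tree V E v a \<longleftrightarrow> forest_rooted V E {v} a"

(* Exploration algorithm.  State: (A, F, L, Er) where Er is the set of edges
   that erased a vertex (the erased vertex is the source of such an edge). *)
type_synonym 'a expl_state = "'a set \<times> ('a \<times> 'a) set \<times> ('a \<times> 'a) list \<times> ('a \<times> 'a) set"

definition in_edges_sorted :: "('a::linorder \<times> 'a) set \<Rightarrow> 'a \<Rightarrow> ('a \<times> 'a) list" where
  "in_edges_sorted F u = map (\<lambda>s. (s, u)) (sorted_list_of_set {s. (s, u) \<in> F})"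

definition expl_init :: "('a::linorder \<times> 'a) set \<Rightarrow> 'a \<Rightarrow> 'a expl_state" where
  "expl_init E v = ({v}, {e\<in>E. fst e \<noteq> v}, in_edges_sorted E v, {})"

definition expl_step :: "('a::linorder \<times> 'a) set \<Rightarrow> 'a expl_state \<Rightarrow> 'a expl_state" where
  "expl_step a st = (case st of (A, F, L, Er) \<Rightarrow>
     (let e = hd L; u = fst e in
      if e \<in> a then
        (let F' = {e'\<in>F. fst e' \<noteq> u} in
         (insert u A, F', filter (\<lambda>e'. fst e' \<noteq> u) (tl L) @ in_edges_sorted F' u, Er))
      else
        (A, {e'\<in>F. fst e' \<noteq> u \<and> snd e' \<noteq> u},
         filter (\<lambda>e'. fst e' \<noteq> u \<and> snd e' \<noteq> u) (tl L), insert e Er)))"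

definition expl_run :: "('a::linorder \<times> 'a) set \<Rightarrow> 'a \<Rightarrow> ('a \<times> 'a) set \<Rightarrow> 'a expl_state" where
  "expl_run E v a = the (while_option (\<lambda>(A, F, L, Er). L \<noteq> []) (expl_step a) (expl_init E v))"

definition phi :: "('a::linorder \<times> 'a) set \<Rightarrow> 'a \<Rightarrow> ('a \<times> 'a) set \<Rightarrow> 'a set" where
  "phi E v a = fst (expl_run E v a)"

definition psi :: "('a::linorder \<times> 'a) set \<Rightarrow> 'a \<Rightarrow> ('a \<times> 'a) set \<Rightarrow> 'a set" where
  "psi E v a = (let A = phi E v a; EA = E \<inter> A \<times> A in
      {x\<in>A. (v, x) \<in> EA\<^sup>* \<and> (x, v) \<in> EA\<^sup>*})"

definition erasing_edges :: "('a::linorder \<times> 'a) set \<Rightarrow> 'a \<Rightarrow> ('a \<times> 'a) set \<Rightarrow> ('a \<times> 'a) set" where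
  "erasing_edges E v a = snd (snd (snd (expl_run E v a)))"

definition erased :: "('a::linorder \<times> 'a) set \<Rightarrow> 'a \<Rightarrow> ('a \<times> 'a) set \<Rightarrow> 'a set" where
  "erased E v a = fst ` erasing_edges E v a"

(* f_\<FF>: edges of b with source outside W, the edge out of each u \<in> \<FF>
   being replaced by e(u) *)
definition f_mod :: "('a::linorder \<times> 'a) set \<Rightarrow> 'a \<Rightarrow> 'a set \<Rightarrow> ('a \<times> 'a) set \<Rightarrow> 'a set \<Rightarrow> ('a \<times> 'a) set" where
  "f_mod E w W b FF = {e\<in>b. fst e \<notin> W \<and> fst e \<notin> FF} \<union> {e\<in>erasing_edges E w b. fst e \<in> FF}"

(* nu_b as a (finitely supported) function from edge sets to coefficients:
   nu_b = \<Sum>_{\<FF> \<subseteq> erased} (-1)^|\<FF>| \<delta>_{f_\<FF>} *)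
definition nu :: "('a::linorder \<times> 'a) set \<Rightarrow> 'a \<Rightarrow> 'a set \<Rightarrow> ('a \<times> 'a) set \<Rightarrow> ('a \<times> 'a) set \<Rightarrow> real" where
  "nu E w W b f = (\<Sum>FF\<in>Pow (erased E w b). (-1) ^ card FF * (if f_mod E w W b FF = f then 1 else 0))"

end

theory Submission
  imports Defs
begin

text \<open>Order the trees by the first step at which their explorations make different
accept/reject decisions, the tree that rejects there being the smaller one. Suppose the
forest f of b' (its edges with source outside W) equals f_F for b. If at the first difference an
edge e = (u, _) is accepted for b but rejected for b', then u is erased for b', so u is not in
W \<subseteq> phi(b'), and u is in phi(b), so u is not in F; hence e lies in f_F = f \<subseteq> b', absurd. Otherwise
the two runs coincide: their erasing edges avoid b', which forces F = {}, and b, b' share the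
accepted edges, which cover W, as well as the edges out of V - W. So the coefficient of the
forest of b in nu_b' vanishes unless b' is smaller than b, and it is 1 for b' = b: the family is
unitriangular.\<close>

definition st_accepted :: "'a expl_state \<Rightarrow> 'a set" where
  "st_accepted s = fst s"
definition st_edges :: "'a expl_state \<Rightarrow> ('a \<times> 'a) set" where
  "st_edges s = fst (snd s)"
definition st_queue :: "'a expl_state \<Rightarrow> ('a \<times> 'a) list" where
  "st_queue s = fst (snd (snd s))"
definition st_erasing :: "'a expl_state \<Rightarrow> ('a \<times> 'a) set" where
  "st_erasing s = snd (snd (snd s))"

lemma st_simps [simp]:
  "st_accepted (A, F, L, Er) = A" "st_edges (A, F, L, Er) = F"
  "st_queue (A, F, L, Er) = L" "st_erasing (A, F, L, Er) = Er"
  by (simp_all add: st_accepted_def st_edges_def st_queue_def st_erasing_def)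

lemma st_accepted_expl_step:
  "st_accepted (expl_step a s) =
     (if hd (st_queue s) \<in> a then insert (fst (hd (st_queue s))) (st_accepted s) else st_accepted s)"
  by (cases s) (simp add: expl_step_def Let_def)

lemma st_erasing_expl_step:
  "st_erasing (expl_step a s) =
     (if hd (st_queue s) \<in> a then st_erasing s else insert (hd (st_queue s)) (st_erasing s))"
  by (cases s) (simp add: expl_step_def Let_def)

lemma expl_step_cong:
  "(hd (st_queue s) \<in> a \<longleftrightarrow> hd (st_queue s) \<in> b) \<Longrightarrow> expl_step a s = expl_step b s"
  by (cases s) (simp add: expl_step_def Let_def)

lemma set_in_edges_sorted: "finite F \<Longrightarrow> set (in_edges_sorted F u) = {e\<in>F. snd e = u}"
proof -
  assume "finite F"
  then have "finite {s. (s, u) \<in> F}"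
    by (rule finite_subset[rotated, OF finite_imageI[of F fst]]) force
  then show ?thesis unfolding in_edges_sorted_def by auto
qed

lemma spanning_tree_root_out_edge: "spanning_tree V E v b \<Longrightarrow> (v, y) \<notin> b"
  unfolding spanning_tree_def forest_rooted_def by blast

lemma spanning_tree_out_edge_unique:
  assumes "spanning_tree V E v b" and "x \<in> V" and "(x, y0) \<in> b"
  shows "(x, y) \<in> b \<longleftrightarrow> y = y0"
proof -
  have "x \<in> V - {v}" using assms spanning_tree_root_out_edge by (metis Diff_iff singletonD)
  with assms show ?thesis unfolding spanning_tree_def forest_rooted_def by metis
qed

lemma psi_subset_phi: "psi E v a \<subseteq> phi E v a"
  unfolding psi_def Let_def by auto

lemma finite_spanning_trees: "finite E \<Longrightarrow> finite {b. spanning_tree V E v b}"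
  by (rule finite_subset[of _ "Pow E"]) (auto simp: spanning_tree_def forest_rooted_def)

lemma nu_eq_0:
  assumes "\<And>FF. FF \<subseteq> erased E v b \<Longrightarrow> f_mod E v W b FF \<noteq> f"
  shows "nu E v W b f = 0"
  unfolding nu_def using assms by (intro sum.neutral) auto

lemma nu_leading_forest:
  assumes "finite (erased E v b)"
    and "\<And>FF. FF \<subseteq> erased E v b \<Longrightarrow> f_mod E v W b FF = f_mod E v W b {} \<Longrightarrow> FF = {}"
  shows "nu E v W b (f_mod E v W b {}) = 1"
proof -
  have "nu E v W b (f_mod E v W b {}) = (\<Sum>FF\<in>Pow (erased E v b). if FF = {} then 1 else 0)"
    unfolding nu_def using assms(2) by (intro sum.cong) auto
  also have "\<dots> = 1" using assms(1) by (simp add: sum.delta')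
  finally show ?thesis .
qed

subsection \<open>Invariant and termination of the exploration\<close>

text \<open>Edges still to be examined never leave an accepted or erased vertex, so every step accepts
or erases a fresh vertex; this keeps accepted and erased vertices apart.\<close>

definition expl_inv :: "('a \<times> 'a) set \<Rightarrow> ('a \<times> 'a) set \<Rightarrow> 'a expl_state \<Rightarrow> bool" where
  "expl_inv E a s \<longleftrightarrow> st_edges s \<subseteq> E \<and> set (st_queue s) \<subseteq> st_edges s
     \<and> (\<forall>e\<in>st_edges s. fst e \<notin> st_accepted s \<and> fst e \<notin> fst ` st_erasing s)
     \<and> st_accepted s \<inter> fst ` st_erasing s = {} \<and> st_erasing s \<subseteq> E \<and> st_erasing s \<inter> a = {}"

lemma expl_inv_init:
  assumes "finite E" and "(v, v) \<notin> E"
  shows "expl_inv E a (expl_init E v)"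
  using assms unfolding expl_inv_def expl_init_def by (auto simp: set_in_edges_sorted)

lemma expl_inv_step:
  fixes a :: "('a::linorder \<times> 'a) set"
  assumes inv: "expl_inv E a s" and "finite E" and "st_queue s \<noteq> []"
  shows "expl_inv E a (expl_step a s) \<and> card (st_edges (expl_step a s)) < card (st_edges s)"
proof -
  obtain A F L Er where s: "s = (A, F, L, Er)" by (cases s)
  let ?e = "hd L" and ?u = "fst (hd L)"
  have eF: "?e \<in> F" and finF: "finite F"
    using inv assms(2,3) s finite_subset unfolding expl_inv_def by (auto dest!: hd_in_set)
  have tlL: "set (tl L) \<subseteq> set L" by (cases L) auto
  show ?thesis
  proof (cases "?e \<in> a")
    case True
    let ?F' = "{e'\<in>F. fst e' \<noteq> ?u}"
    have step: "expl_step a s =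
        (insert ?u A, ?F', filter (\<lambda>e'. fst e' \<noteq> ?u) (tl L) @ in_edges_sorted ?F' ?u, Er)"
      using True s by (simp add: expl_step_def Let_def)
    have "card ?F' < card F" using eF finF by (intro psubset_card_mono) auto
    moreover have "expl_inv E a (expl_step a s)"
      using inv eF tlL finF s unfolding step expl_inv_def by (auto simp: set_in_edges_sorted)
    ultimately show ?thesis using step s by simp
  next
    case False
    let ?F' = "{e'\<in>F. fst e' \<noteq> ?u \<and> snd e' \<noteq> ?u}"
    have step: "expl_step a s =
        (A, ?F', filter (\<lambda>e'. fst e' \<noteq> ?u \<and> snd e' \<noteq> ?u) (tl L), insert ?e Er)"
      using False s by (simp add: expl_step_def Let_def)
    have "card ?F' < card F" using eF finF by (intro psubset_card_mono) auto
    moreover have "expl_inv E a (expl_step a s)"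
      using inv eF tlL False s unfolding step expl_inv_def by auto
    ultimately show ?thesis using step s by simp
  qed
qed

definition expl_iter :: "('a::linorder \<times> 'a) set \<Rightarrow> 'a \<Rightarrow> ('a \<times> 'a) set \<Rightarrow> nat \<Rightarrow> 'a expl_state" where
  "expl_iter E v a n = (expl_step a ^^ n) (expl_init E v)"

definition expl_length :: "('a::linorder \<times> 'a) set \<Rightarrow> 'a \<Rightarrow> ('a \<times> 'a) set \<Rightarrow> nat" where
  "expl_length E v a = (LEAST k. st_queue (expl_iter E v a k) = [])"

lemma expl_iter_0 [simp]: "expl_iter E v a 0 = expl_init E v"
  by (simp add: expl_iter_def)

lemma expl_iter_Suc [simp]: "expl_iter E v a (Suc n) = expl_step a (expl_iter E v a n)"
  by (simp add: expl_iter_def)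


locale finite_loopless_root =
  fixes E :: "('a::linorder \<times> 'a) set" and v :: 'a
  assumes finite_E: "finite E" and no_loop: "(v, v) \<notin> E"
begin

lemma expl_inv_iter_card:
  "(\<forall>i<n. st_queue (expl_iter E v a i) \<noteq> []) \<Longrightarrow>
    expl_inv E a (expl_iter E v a n)
    \<and> card (st_edges (expl_iter E v a n)) + n \<le> card (st_edges (expl_init E v))"
proof (induction n)
  case 0
  show ?case using expl_inv_init[OF finite_E no_loop] by simp
next
  case (Suc n)
  then show ?case using expl_inv_step[OF _ finite_E, of a "expl_iter E v a n"] by fastforce
qed

lemma expl_terminates: "\<exists>k. st_queue (expl_iter E v a k) = []"
proof (rule ccontr)
  assume "\<nexists>k. st_queue (expl_iter E v a k) = []"
  then show False
    using expl_inv_iter_card[of "Suc (card (st_edges (expl_init E v)))" a] by auto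
qed

lemma queue_expl_length: "st_queue (expl_iter E v a (expl_length E v a)) = []"
  unfolding expl_length_def using expl_terminates by (rule LeastI_ex)

lemma queue_before_expl_length: "i < expl_length E v a \<Longrightarrow> st_queue (expl_iter E v a i) \<noteq> []"
  unfolding expl_length_def by (rule not_less_Least)

lemma expl_inv_iter: "i \<le> expl_length E v a \<Longrightarrow> expl_inv E a (expl_iter E v a i)"
  using expl_inv_iter_card[of i a] queue_before_expl_length by auto

lemma expl_run_eq_iter: "expl_run E v a = expl_iter E v a (expl_length E v a)"
proof -
  have cond: "(\<lambda>(A, F, L, Er). L \<noteq> []) = (\<lambda>s. st_queue s \<noteq> [])"
    by (auto simp: fun_eq_iff)
  show ?thesis using expl_terminates[of a]
    unfolding expl_run_def while_option_def cond expl_length_def expl_iter_def by auto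
qed

lemma phi_eq_iter: "phi E v a = st_accepted (expl_iter E v a (expl_length E v a))"
  unfolding phi_def expl_run_eq_iter by (simp add: st_accepted_def)

lemma erasing_edges_eq_iter: "erasing_edges E v a = st_erasing (expl_iter E v a (expl_length E v a))"
  unfolding erasing_edges_def expl_run_eq_iter by (simp add: st_erasing_def)

lemma finite_erased: "finite (erased E v a)"
proof -
  have "erasing_edges E v a \<subseteq> E"
    using expl_inv_iter[of _ a] unfolding erasing_edges_eq_iter expl_inv_def by blast
  then show ?thesis unfolding erased_def using finite_E finite_subset by blast
qed

lemma phi_disjoint_erased: "phi E v a \<inter> erased E v a = {}"
  using expl_inv_iter[OF order.refl, of a]
  unfolding phi_eq_iter erased_def erasing_edges_eq_iter expl_inv_def by (elim conjE)

lemma erasing_edges_disjoint: "erasing_edges E v a \<inter> a = {}"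
  using expl_inv_iter[OF order.refl, of a]
  unfolding erasing_edges_eq_iter expl_inv_def by (elim conjE)

end

subsection \<open>Comparing the explorations of two trees\<close>

text \<open>After termination the queue is empty and \<open>expl_accepts\<close> tests the unspecified \<open>hd []\<close>;
this is harmless, since only decisions taken before termination are ever compared.\<close>

definition expl_accepts :: "('a::linorder \<times> 'a) set \<Rightarrow> 'a \<Rightarrow> ('a \<times> 'a) set \<Rightarrow> nat \<Rightarrow> bool" where
  "expl_accepts E v a i \<longleftrightarrow> hd (st_queue (expl_iter E v a i)) \<in> a"

lemma st_accepted_expl_iter_mono:
  "i \<le> j \<Longrightarrow> st_accepted (expl_iter E v a i) \<subseteq> st_accepted (expl_iter E v a j)"
  by (rule lift_Suc_mono_le[of "\<lambda>n. st_accepted (expl_iter E v a n)"])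
    (auto simp: st_accepted_expl_step)

lemma st_erasing_expl_iter_mono:
  "i \<le> j \<Longrightarrow> st_erasing (expl_iter E v a i) \<subseteq> st_erasing (expl_iter E v a j)"
  by (rule lift_Suc_mono_le[of "\<lambda>n. st_erasing (expl_iter E v a n)"])
    (auto simp: st_erasing_expl_step)

lemma st_accepted_expl_iter_cases:
  assumes "x \<in> st_accepted (expl_iter E v a n)"
  shows "x = v \<or> (\<exists>i<n. expl_accepts E v a i \<and> fst (hd (st_queue (expl_iter E v a i))) = x)"
  using assms
proof (induction n)
  case 0
  then show ?case by (simp add: expl_init_def)
next
  case (Suc n)
  then show ?case
    by (auto simp: st_accepted_expl_step expl_accepts_def split: if_splits intro: less_SucI)
qed

lemma expl_iter_eq_if_same_decisions:
  "(\<forall>i<n. expl_accepts E v b i = expl_accepts E v b' i) \<Longrightarrow> expl_iter E v b n = expl_iter E v b' n"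
proof (induction n)
  case (Suc n)
  then have "expl_iter E v b n = expl_iter E v b' n" by simp
  moreover have "expl_accepts E v b n = expl_accepts E v b' n" using Suc.prems by simp
  ultimately show ?case unfolding expl_iter_Suc expl_accepts_def by (metis expl_step_cong)
qed simp

definition expl_less :: "('a::linorder \<times> 'a) set \<Rightarrow> 'a \<Rightarrow> ('a \<times> 'a) set \<Rightarrow> ('a \<times> 'a) set \<Rightarrow> bool" where
  "expl_less E v b b' \<longleftrightarrow> (\<exists>n. (\<forall>i<n. expl_accepts E v b i = expl_accepts E v b' i)
     \<and> \<not> expl_accepts E v b n \<and> expl_accepts E v b' n)"

lemma expl_less_irrefl: "\<not> expl_less E v b b"
  unfolding expl_less_def by auto

lemma expl_less_trans:
  assumes "expl_less E v x y" and "expl_less E v y z"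
  shows "expl_less E v x z"
proof -
  obtain n m where
    n: "\<forall>i<n. expl_accepts E v x i = expl_accepts E v y i" "\<not> expl_accepts E v x n" "expl_accepts E v y n"
    and m: "\<forall>i<m. expl_accepts E v y i = expl_accepts E v z i" "\<not> expl_accepts E v y m" "expl_accepts E v z m"
    using assms unfolding expl_less_def by blast
  show ?thesis
  proof (cases n m rule: linorder_cases)
    case less
    then show ?thesis unfolding expl_less_def using n m by (intro exI[of _ n]) auto
  next
    case equal
    then show ?thesis using n m by simp
  next
    case greater
    then show ?thesis unfolding expl_less_def using n m by (intro exI[of _ m]) auto
  qed
qed

lemma asymp_on_expl_less: "asymp_on A (expl_less E v)"
  by (rule asymp_onI) (meson expl_less_irrefl expl_less_trans)

lemma transp_on_expl_less: "transp_on A (expl_less E v)"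
  by (rule transp_onI) (rule expl_less_trans)

context finite_loopless_root
begin

lemma expl_length_eq_if_same_decisions:
  assumes "\<forall>i<expl_length E v b. expl_accepts E v b i = expl_accepts E v b' i"
  shows "expl_length E v b' = expl_length E v b"
  unfolding expl_length_def[of E v b']
proof (rule Least_equality)
  have iter_eq: "j \<le> expl_length E v b \<Longrightarrow> expl_iter E v b j = expl_iter E v b' j" for j
    using assms by (intro expl_iter_eq_if_same_decisions) auto
  show "st_queue (expl_iter E v b' (expl_length E v b)) = []"
    using queue_expl_length[of b] iter_eq[of "expl_length E v b"] by simp
  show "expl_length E v b \<le> k" if "st_queue (expl_iter E v b' k) = []" for k
    using that queue_before_expl_length[of k b] iter_eq[of k] by force
qed

lemma less_expl_length_if_same_decisions:
  assumes "\<forall>i<n. expl_accepts E v b i = expl_accepts E v b' i" and "n < expl_length E v b"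
  shows "n < expl_length E v b'"
proof (rule ccontr)
  let ?K' = "expl_length E v b'"
  assume "\<not> n < ?K'"
  then have "expl_iter E v b ?K' = expl_iter E v b' ?K'"
    using assms(1) by (intro expl_iter_eq_if_same_decisions) auto
  then have "st_queue (expl_iter E v b ?K') = []" using queue_expl_length[of b'] by simp
  moreover have "?K' < expl_length E v b" using \<open>\<not> n < ?K'\<close> assms(2) by simp
  ultimately show False using queue_before_expl_length[of ?K' b] by simp
qed

lemma erasing_edges_eq_if_same_decisions:
  assumes "\<forall>i<expl_length E v b. expl_accepts E v b i = expl_accepts E v b' i"
  shows "erasing_edges E v b' = erasing_edges E v b"
  using expl_length_eq_if_same_decisions[OF assms] expl_iter_eq_if_same_decisions[OF assms]
  by (simp add: erasing_edges_eq_iter)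

lemma same_decisions_imp_no_erasure:
  assumes FF: "FF \<subseteq> erased E v b" and f_eq: "f_mod E v W b' {} = f_mod E v W b FF"
    and same: "\<forall>i<expl_length E v b. expl_accepts E v b i = expl_accepts E v b' i"
  shows "FF = {}"
proof (rule ccontr)
  assume "FF \<noteq> {}"
  then obtain e where e: "e \<in> erasing_edges E v b" "fst e \<in> FF"
    using FF unfolding erased_def by blast
  then have "e \<in> f_mod E v W b FF" unfolding f_mod_def by auto
  then have "e \<in> f_mod E v W b' {}" by (simp only: f_eq)
  then have "e \<in> b'" unfolding f_mod_def by auto
  with e(1) erasing_edges_eq_if_same_decisions[OF same] erasing_edges_disjoint[of b']
  show False by auto
qed

lemma same_decisions_imp_eq:
  assumes b: "spanning_tree V E v b" and b': "spanning_tree V E v b'"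
    and "W \<subseteq> V" and W_phi: "W \<subseteq> phi E v b" and f_eq: "f_mod E v W b' {} = f_mod E v W b {}"
    and same: "\<forall>i<expl_length E v b. expl_accepts E v b i = expl_accepts E v b' i"
  shows "b = b'"
proof -
  define K where "K = expl_length E v b"
  have same_on_W: "(x, y) \<in> b \<longleftrightarrow> (x, y) \<in> b'" if "x \<in> W" for x y
  proof (cases "x = v")
    case True
    then show ?thesis using b b' spanning_tree_root_out_edge by metis
  next
    case False
    have "x \<in> st_accepted (expl_iter E v b K)"
      using that W_phi by (simp add: phi_eq_iter K_def subset_iff)
    then obtain i where i: "i < K" "expl_accepts E v b i" "fst (hd (st_queue (expl_iter E v b i))) = x"
      using st_accepted_expl_iter_cases False by blast
    moreover have "expl_iter E v b i = expl_iter E v b' i"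
      using same i(1) by (intro expl_iter_eq_if_same_decisions) (auto simp: K_def)
    ultimately obtain y0 where "(x, y0) \<in> b" "(x, y0) \<in> b'"
      using same unfolding expl_accepts_def K_def by (metis prod.collapse)
    moreover have "x \<in> V" using that \<open>W \<subseteq> V\<close> by auto
    ultimately show ?thesis using spanning_tree_out_edge_unique b b' by metis
  qed
  show "b = b'"
  proof (intro set_eqI)
    fix e :: "'a \<times> 'a"
    show "e \<in> b \<longleftrightarrow> e \<in> b'"
    proof (cases "fst e \<in> W")
      case True
      then show ?thesis using same_on_W[of "fst e" "snd e"] by simp
    next
      case False
      then show ?thesis using f_eq unfolding f_mod_def by blast
    qed
  qed
qed

lemma first_difference_imp_expl_less:
  assumes W_phi: "W \<subseteq> phi E v b'"
    and FF: "FF \<subseteq> erased E v b" and f_eq: "f_mod E v W b' {} = f_mod E v W b FF"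
    and n: "n < expl_length E v b" "\<forall>i<n. expl_accepts E v b i = expl_accepts E v b' i"
      "expl_accepts E v b n \<noteq> expl_accepts E v b' n"
  shows "expl_less E v b b'"
proof -
  define K where "K = expl_length E v b"
  define K' where "K' = expl_length E v b'"
  have iter_eq: "j \<le> n \<Longrightarrow> expl_iter E v b j = expl_iter E v b' j" for j
    using n(2) by (intro expl_iter_eq_if_same_decisions) auto
  have "n < K'"
    using less_expl_length_if_same_decisions n(1,2) by (simp add: K'_def)
  have "\<not> expl_accepts E v b n"
  proof
    assume accepts: "expl_accepts E v b n"
    define e where "e = hd (st_queue (expl_iter E v b n))"
    have "e \<in> b" "e \<notin> b'"
      using accepts n(3) iter_eq[of n] unfolding e_def expl_accepts_def by auto
    have "e \<in> st_erasing (expl_iter E v b' (Suc n))"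
      using \<open>e \<notin> b'\<close> iter_eq[of n] by (simp add: e_def st_erasing_expl_step)
    then have "e \<in> st_erasing (expl_iter E v b' K')"
      using st_erasing_expl_iter_mono[of "Suc n" K'] \<open>n < K'\<close> by auto
    then have "fst e \<notin> W"
      using phi_disjoint_erased[of b'] W_phi
      unfolding erased_def erasing_edges_eq_iter K'_def by (auto dest: imageI[of _ _ fst])
    have "fst e \<in> st_accepted (expl_iter E v b (Suc n))"
      using \<open>e \<in> b\<close> by (simp add: e_def st_accepted_expl_step)
    then have "fst e \<in> phi E v b"
      using st_accepted_expl_iter_mono[of "Suc n" K] n(1) by (auto simp: phi_eq_iter K_def)
    then have "fst e \<notin> FF"
      using FF phi_disjoint_erased[of b] by blast
    with \<open>e \<in> b\<close> \<open>fst e \<notin> W\<close> have "e \<in> f_mod E v W b FF"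
      unfolding f_mod_def by auto
    then have "e \<in> f_mod E v W b' {}" by (simp only: f_eq)
    with \<open>e \<notin> b'\<close> show False by (simp add: f_mod_def)
  qed
  with n show ?thesis unfolding expl_less_def by auto
qed

lemma f_mod_eq_imp_expl_less_or_eq:
  assumes "spanning_tree V E v b" and "spanning_tree V E v b'"
    and "W \<subseteq> V" and "W \<subseteq> phi E v b" and "W \<subseteq> phi E v b'"
    and "FF \<subseteq> erased E v b" and "f_mod E v W b' {} = f_mod E v W b FF"
  shows "expl_less E v b b' \<or> (FF = {} \<and> b = b')"
proof (cases "\<forall>i<expl_length E v b. expl_accepts E v b i = expl_accepts E v b' i")
  case True
  then have "FF = {}" using same_decisions_imp_no_erasure assms(6,7) by blast
  with True show ?thesis using same_decisions_imp_eq assms by blast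
next
  case False
  define differ where
    "differ n \<longleftrightarrow> n < expl_length E v b \<and> expl_accepts E v b n \<noteq> expl_accepts E v b' n" for n
  obtain n where "differ n" and "\<forall>i<n. \<not> differ i"
    using False exists_least_iff[of differ] unfolding differ_def by blast
  then show ?thesis
    using first_difference_imp_expl_less[of W b' FF b n] assms
    unfolding differ_def by (meson order.strict_trans)
qed

lemma nu_spanning_tree_leading_forest:
  assumes "spanning_tree V E v b" and "W \<subseteq> V" and "W \<subseteq> phi E v b"
  shows "nu E v W b (f_mod E v W b {}) = 1"
  using f_mod_eq_imp_expl_less_or_eq[OF assms(1,1,2,3,3)] expl_less_irrefl
  by (intro nu_leading_forest[OF finite_erased]) blast

lemma nu_at_leading_forest_imp_expl_less:
  assumes "spanning_tree V E v b" and "spanning_tree V E v b'"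
    and "W \<subseteq> V" and "W \<subseteq> phi E v b" and "W \<subseteq> phi E v b'"
    and "b' \<noteq> b" and nonzero: "nu E v W b' (f_mod E v W b {}) \<noteq> 0"
  shows "expl_less E v b' b"
proof (rule ccontr)
  assume "\<not> expl_less E v b' b"
  then have "f_mod E v W b' FF \<noteq> f_mod E v W b {}" if "FF \<subseteq> erased E v b'" for FF
    using f_mod_eq_imp_expl_less_or_eq[OF assms(2,1,3,5,4) that] \<open>b' \<noteq> b\<close> by auto
  then show False using nu_eq_0 nonzero by blast
qed

end

lemma triangular_family_independent:
  fixes nu :: "'b \<Rightarrow> 'f \<Rightarrow> 'r::field" and lead :: "'b \<Rightarrow> 'f"
  assumes "finite T" and "asymp_on T prec" and "transp_on T prec"
    and lead_nonzero: "\<And>b. b \<in> T \<Longrightarrow> nu b (lead b) \<noteq> 0"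
    and below_lead: "\<And>b b'. b \<in> T \<Longrightarrow> b' \<in> T \<Longrightarrow> b' \<noteq> b \<Longrightarrow> nu b' (lead b) \<noteq> 0 \<Longrightarrow> prec b' b"
    and combination_zero: "\<And>f. (\<Sum>b\<in>T. c b * nu b f) = 0"
  shows "\<forall>b\<in>T. c b = 0"
proof (rule ccontr)
  assume "\<not> (\<forall>b\<in>T. c b = 0)"
  then obtain b where b: "b \<in> T" "c b \<noteq> 0" and minimal: "\<forall>b'\<in>T. prec b' b \<longrightarrow> c b' = 0"
    using Finite_Set.bex_min_element_with_property[OF assms(1-3), of "\<lambda>b. c b \<noteq> 0"] by blast
  have "c b' * nu b' (lead b) = 0" if "b' \<in> T - {b}" for b'
    using that minimal below_lead[OF b(1), of b'] by auto
  then have "(\<Sum>b'\<in>T. c b' * nu b' (lead b)) = c b * nu b (lead b)"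
    by (simp add: sum.remove[OF \<open>finite T\<close> b(1)] sum.neutral)
  with combination_zero b lead_nonzero show False by simp
qed

theorem lemma4p5:
  fixes V :: "'a::linorder set" and E :: "('a \<times> 'a) set" and W :: "'a set" and w :: 'a
  assumes "simple_digraph V E"
    and "strongly_connected_set E V"
    and "W \<subseteq> V" and "strongly_connected_set E W" and "w \<in> W"
  shows "\<forall>c :: ('a \<times> 'a) set \<Rightarrow> real.
           (\<forall>f. (\<Sum>b\<in>{b. spanning_tree V E w b \<and> psi E w b = W}. c b * nu E w W b f) = 0)
           \<longrightarrow> (\<forall>b\<in>{b. spanning_tree V E w b \<and> psi E w b = W}. c b = 0)"
proof (intro allI impI)
  fix c :: "('a \<times> 'a) set \<Rightarrow> real"
  let ?T = "{b. spanning_tree V E w b \<and> psi E w b = W}"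
  assume combination_zero: "\<forall>f. (\<Sum>b\<in>?T. c b * nu E w W b f) = 0"
  have "finite E" and "(w, w) \<notin> E"
    using assms(1) unfolding simple_digraph_def by (meson finite_SigmaI finite_subset)+
  then interpret finite_loopless_root E w by unfold_locales
  have "finite ?T" using finite_spanning_trees[OF finite_E] by simp
  have W_phi: "W \<subseteq> phi E w b" if "b \<in> ?T" for b
    using that psi_subset_phi[of E w b] by simp
  show "\<forall>b\<in>?T. c b = 0"
  proof (rule triangular_family_independent[where nu = "nu E w W" and lead = "\<lambda>b. f_mod E w W b {}",
        OF \<open>finite ?T\<close> asymp_on_expl_less transp_on_expl_less])
    show "nu E w W b (f_mod E w W b {}) \<noteq> 0" if "b \<in> ?T" for b
      using nu_spanning_tree_leading_forest[OF _ assms(3) W_phi[OF that]] that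
      by simp
    show "expl_less E w b' b"
      if "b \<in> ?T" "b' \<in> ?T" "b' \<noteq> b" "nu E w W b' (f_mod E w W b {}) \<noteq> 0" for b b'
      using nu_at_leading_forest_imp_expl_less[OF _ _ assms(3)] W_phi that
      by simp
  qed (use combination_zero in blast)
qed

end
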